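(* In the setting described in the context, fix $n\ge 1$, $\tau>0$ and a point ${\bf y}\in\Omega$, and assume that the $nm\times nm$ data-driven mass matrix ${\bf M}$ is symmetric positive definite with block Cholesky factorization ${\bf M}={\bf R}^T{\bf R}$, ${\bf R}$ block upper triangular. Then for every $j=0,\ldots,n-1$ the estimated internal wave evaluated at the sensor locations and at time $t_j=j\tau$ satisfies \[ \big(g(t_j,{\bf x}_1;{\bf y}),\ldots,g(t_j,{\bf x}_m;{\bf y})\big)={\bf V}_o({\bf y})\,{\bf R}\,{\bf e}_j , \] where ${\bf e}_j\in\mathbb{R}^{nm\times m}$ is the $(j+1)$-th column block (of width $m$) of the $nm\times nm$ identity matrix.
   Context: Let $\Omega\subset\mathbb{R}^d$ be a bounded domain whose boundary is split into an "accessible" part $\partial\Omega_{\rm ac}$ (homogeneous Neumann condition) and an "inaccessible" part $\partial\Omega_{\rm inac}=\partial\Omega\setminus\partial\Omega_{\rm ac}$ (homogeneous Dirichlet condition). For a positive wave speed $c({\bf x})$ let $A(c)=-c({\bf x})\Delta\big[c({\bf x})\,\cdot\,\big]$ with these boundary conditions; it is self-adjoint and positive on $L^2(\Omega)$, with eigenvalues $0<\theta_1\le\theta_2\le\cdots\to\infty$ and $L^2(\Omega)$-orthonormal eigenfunctions $y_l$. Functions of $A(c)$ are defined spectrally: $h(A(c))\phi=\sum_l h(\theta_l)\,y_l\,\langle y_l,\phi\rangle$, and for a Dirac mass $h(A(c))\delta_{\bf z}({\bf x})=\sum_l h(\theta_l)y_l({\bf x})y_l({\bf z})$. The pulse $f(t)$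 is real, even, supported in a short interval, with Fourier transform $\hat f(\omega)=\int f(t)e^{i\omega t}dt\ge 0$ that is band-limited (so all the spectral sums involving $\hat f$ are finite). Sensors are at points ${\bf x}_1,\ldots,{\bf x}_m\in\Omega$. Sensor functions: $\delta^f_{{\bf x}_s}=\hat f^{1/2}(\sqrt{A(c)})\delta_{{\bf x}_s}$, grouped in the row vector $\boldsymbol\delta^f({\bf x})=(\delta^f_{{\bf x}_1}({\bf x}),\ldots,\delta^f_{{\bf x}_m}({\bf x}))$. Snapshots: ${\bf u}_j({\bf x})=\cos(j\tau\sqrt{A(c)})\boldsymbol\delta^f({\bf x})$ ($m$-dimensional row vectors), ${\bf U}({\bf x})=({\bf u}_0({\bf x}),\ldots,{\bf u}_{n-1}({\bf x}))$. Data matrices: ${\bf D}_j=\int_\Omega\boldsymbol\delta^f({\bf x})^T{\bf u}_j({\bf x})\,d{\bf x}\in\mathbb{R}^{m\times m}$, $j=0,\ldots,2n-1$ (their $(r,s)$ entries are the even-in-time extension of the wave emitted at ${\bf x}_s$ and recorded at ${\bf x}_r$ at time $j\tau$). The mass matrix ${\bf M}\in\mathbb{R}^{nm\times nm}$ has $m\times m$ blocks ${\bf M}_{j,l}=\tfrac12({\bf D}_{j+l}+{\bf D}_{|j-l|})$, $j,l=0,\ldots,n-1$ (equivalently ${\bf M}=\int_\Omega{\bf U}^T{\bf U}\,d{\bf x}$). With ${\bf M}={\bf R}^T{\bf R}$, the orthonormal snapshots are ${\bf V}({\bf x})={\bf U}({\bf x}){\bf R}^{-1}=({\bf v}_0({\bf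 x}),\ldots,{\bf v}_{n-1}({\bf x}))$. A known reference wave speed $c_o({\bf x})$ gives, by the same construction with $c$ replaced by $c_o$, snapshots ${\bf U}_o$, Cholesky factor ${\bf R}_o$ of its mass matrix, and orthonormal snapshots ${\bf V}_o({\bf x})={\bf U}_o({\bf x}){\bf R}_o^{-1}$. The ROM point spread function is $\delta^{\rm ROM}_{\bf y}({\bf x})={\bf V}({\bf x}){\bf V}_o({\bf y})^T=\sum_{j=0}^{n-1}{\bf v}_j({\bf x}){\bf v}_{o,j}({\bf y})^T$, and the estimated internal wave is $g(t,{\bf x};{\bf y})=\cos(t\sqrt{A(c)})\,\hat f^{1/2}(\sqrt{A(c)})\,\delta^{\rm ROM}_{\bf y}({\bf x})$. *)

theory Defs
  imports "HOL-Analysis.Analysis" "Jordan_Normal_Form.Matrix"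
begin

text \<open>
  The operator A(c) is represented through its spectral data: eigenvalues
  th :: nat => real (th 0 <= th 1 <= ...) and L2(Omega)-orthonormal eigenfunctions
  ef :: nat => 'a => real.  All functions of A(c) are defined spectrally.
\<close>

definition spectral_system :: "'a::euclidean_space set \<Rightarrow> (nat \<Rightarrow> real) \<Rightarrow> (nat \<Rightarrow> 'a \<Rightarrow> real) \<Rightarrow> bool" where
  "spectral_system \<Omega> th ef \<longleftrightarrow>
     (\<forall>l. 0 < th l) \<and> mono th \<and> filterlim th at_top sequentially \<and>
     (\<forall>k l. integrable (lebesgue_on \<Omega>) (\<lambda>x. ef k x * ef l x) \<and>
            integral\<^sup>L (lebesgue_on \<Omega>) (\<lambda>x. ef k x * ef l x) = (if k = l then 1 else 0))"

definition spec_op :: "'a::euclidean_space set \<Rightarrow> (nat \<Rightarrow> real) \<Rightarrow> (nat \<Rightarrow> 'a \<Rightarrow> real)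
    \<Rightarrow> (real \<Rightarrow> real) \<Rightarrow> ('a \<Rightarrow> real) \<Rightarrow> 'a \<Rightarrow> real" where
  "spec_op \<Omega> th ef h \<phi> x =
     (\<Sum>l. h (th l) * ef l x * integral\<^sup>L (lebesgue_on \<Omega>) (\<lambda>z. ef l z * \<phi> z))"

text \<open>h(A) delta_z (x) = sum_l h(theta_l) y_l(x) y_l(z)\<close>
definition spec_dirac :: "(nat \<Rightarrow> real) \<Rightarrow> (nat \<Rightarrow> 'a \<Rightarrow> real) \<Rightarrow> (real \<Rightarrow> real) \<Rightarrow> 'a \<Rightarrow> 'a \<Rightarrow> real" where
  "spec_dirac th ef h z x = (\<Sum>l. h (th l) * ef l x * ef l z)"

text \<open>sensor function delta^f_{x_s} = fhat^{1/2}(sqrt A) delta_{x_s}; sensors indexed s = 0..m-1\<close>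
definition sensor_fun :: "(nat \<Rightarrow> real) \<Rightarrow> (nat \<Rightarrow> 'a \<Rightarrow> real) \<Rightarrow> (real \<Rightarrow> real) \<Rightarrow> (nat \<Rightarrow> 'a)
    \<Rightarrow> nat \<Rightarrow> 'a \<Rightarrow> real" where
  "sensor_fun th ef fhat xs s = spec_dirac th ef (\<lambda>w. sqrt (fhat (sqrt w))) (xs s)"

definition snapshot :: "'a::euclidean_space set \<Rightarrow> (nat \<Rightarrow> real) \<Rightarrow> (nat \<Rightarrow> 'a \<Rightarrow> real)
    \<Rightarrow> (real \<Rightarrow> real) \<Rightarrow> real \<Rightarrow> (nat \<Rightarrow> 'a) \<Rightarrow> nat \<Rightarrow> nat \<Rightarrow> 'a \<Rightarrow> real" where
  "snapshot \<Omega> th ef fhat \<tau> xs j s =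
     spec_op \<Omega> th ef (\<lambda>w. cos (real j * \<tau> * sqrt w)) (sensor_fun th ef fhat xs s)"

definition data_mat :: "'a::euclidean_space set \<Rightarrow> (nat \<Rightarrow> real) \<Rightarrow> (nat \<Rightarrow> 'a \<Rightarrow> real)
    \<Rightarrow> (real \<Rightarrow> real) \<Rightarrow> real \<Rightarrow> (nat \<Rightarrow> 'a) \<Rightarrow> nat \<Rightarrow> nat \<Rightarrow> real mat" where
  "data_mat \<Omega> th ef fhat \<tau> xs m j = Matrix.mat m m (\<lambda>(r, s).
     integral\<^sup>L (lebesgue_on \<Omega>) (\<lambda>x. sensor_fun th ef fhat xs r x * snapshot \<Omega> th ef fhat \<tau> xs j s x))"

text \<open>mass matrix, blocks M_{j,l} = (D_{j+l} + D_{|j-l|})/2; global index a = j*m + r\<close>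
definition mass_mat :: "'a::euclidean_space set \<Rightarrow> (nat \<Rightarrow> real) \<Rightarrow> (nat \<Rightarrow> 'a \<Rightarrow> real)
    \<Rightarrow> (real \<Rightarrow> real) \<Rightarrow> real \<Rightarrow> (nat \<Rightarrow> 'a) \<Rightarrow> nat \<Rightarrow> nat \<Rightarrow> real mat" where
  "mass_mat \<Omega> th ef fhat \<tau> xs m n = Matrix.mat (n * m) (n * m) (\<lambda>(a, b).
     (data_mat \<Omega> th ef fhat \<tau> xs m (a div m + b div m) $$ (a mod m, b mod m)
      + data_mat \<Omega> th ef fhat \<tau> xs m (max (a div m) (b div m) - min (a div m) (b div m))
          $$ (a mod m, b mod m)) / 2)"

definition snap_row :: "'a::euclidean_space set \<Rightarrow> (nat \<Rightarrow> real) \<Rightarrow> (nat \<Rightarrow> 'a \<Rightarrow> real)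
    \<Rightarrow> (real \<Rightarrow> real) \<Rightarrow> real \<Rightarrow> (nat \<Rightarrow> 'a) \<Rightarrow> nat \<Rightarrow> nat \<Rightarrow> 'a \<Rightarrow> real mat" where
  "snap_row \<Omega> th ef fhat \<tau> xs m n x =
     Matrix.mat 1 (n * m) (\<lambda>(_, b). snapshot \<Omega> th ef fhat \<tau> xs (b div m) (b mod m) x)"

definition mat_inv :: "real mat \<Rightarrow> real mat" where
  "mat_inv R = (SOME S. S \<in> carrier_mat (dim_row R) (dim_row R) \<and> inverts_mat R S \<and> inverts_mat S R)"

definition orth_snap :: "'a::euclidean_space set \<Rightarrow> (nat \<Rightarrow> real) \<Rightarrow> (nat \<Rightarrow> 'a \<Rightarrow> real)
    \<Rightarrow> (real \<Rightarrow> real) \<Rightarrow> real \<Rightarrow> (nat \<Rightarrow> 'a) \<Rightarrow> nat \<Rightarrow> nat \<Rightarrow> real mat \<Rightarrow> 'a \<Rightarrow> real mat" where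
  "orth_snap \<Omega> th ef fhat \<tau> xs m n R x = snap_row \<Omega> th ef fhat \<tau> xs m n x * mat_inv R"

definition sym_pos_def :: "real mat \<Rightarrow> bool" where
  "sym_pos_def M \<longleftrightarrow> M \<in> carrier_mat (dim_row M) (dim_row M) \<and> transpose_mat M = M \<and>
     (\<forall>v \<in> carrier_vec (dim_row M). v \<noteq> 0\<^sub>v (dim_row M) \<longrightarrow> v \<bullet> (M *\<^sub>v v) > 0)"

definition block_upper_triangular :: "nat \<Rightarrow> real mat \<Rightarrow> bool" where
  "block_upper_triangular m R \<longleftrightarrow>
     (\<forall>a < dim_row R. \<forall>b < dim_col R. b div m < a div m \<longrightarrow> R $$ (a, b) = 0)"

definition rom_psf :: "'a::euclidean_space set \<Rightarrow> (nat \<Rightarrow> real) \<Rightarrow> (nat \<Rightarrow> 'a \<Rightarrow> real)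
    \<Rightarrow> (nat \<Rightarrow> real) \<Rightarrow> (nat \<Rightarrow> 'a \<Rightarrow> real)
    \<Rightarrow> (real \<Rightarrow> real) \<Rightarrow> real \<Rightarrow> (nat \<Rightarrow> 'a) \<Rightarrow> nat \<Rightarrow> nat \<Rightarrow> real mat \<Rightarrow> real mat
    \<Rightarrow> 'a \<Rightarrow> 'a \<Rightarrow> real" where
  "rom_psf \<Omega> th ef tho efo fhat \<tau> xs m n R Ro y x =
     (orth_snap \<Omega> th ef fhat \<tau> xs m n R x
        * transpose_mat (orth_snap \<Omega> tho efo fhat \<tau> xs m n Ro y)) $$ (0, 0)"

definition internal_wave :: "'a::euclidean_space set \<Rightarrow> (nat \<Rightarrow> real) \<Rightarrow> (nat \<Rightarrow> 'a \<Rightarrow> real)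
    \<Rightarrow> (nat \<Rightarrow> real) \<Rightarrow> (nat \<Rightarrow> 'a \<Rightarrow> real)
    \<Rightarrow> (real \<Rightarrow> real) \<Rightarrow> real \<Rightarrow> (nat \<Rightarrow> 'a) \<Rightarrow> nat \<Rightarrow> nat \<Rightarrow> real mat \<Rightarrow> real mat
    \<Rightarrow> real \<Rightarrow> 'a \<Rightarrow> 'a \<Rightarrow> real" where
  "internal_wave \<Omega> th ef tho efo fhat \<tau> xs m n R Ro t x y =
     spec_op \<Omega> th ef (\<lambda>w. cos (t * sqrt w) * sqrt (fhat (sqrt w)))
       (rom_psf \<Omega> th ef tho efo fhat \<tau> xs m n R Ro y) x"

definition block_unit :: "nat \<Rightarrow> nat \<Rightarrow> nat \<Rightarrow> real mat" where
  "block_unit m n j = Matrix.mat (n * m) m (\<lambda>(a, b). if a = j * m + b then 1 else 0)"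

end

theory Submission
  imports Defs "Jordan_Normal_Form.Determinant"
begin

text \<open>Since fhat is band-limited and the eigenvalues tend to infinity, sensor functions and
  snapshots lie in the span of finitely many eigenfunctions, on which every function of A(c) acts
  diagonally on the coefficients. There the product formula
  cos(j tau w) cos(k tau w) = (cos((j + k) tau w) + cos(|j - k| tau w)) / 2
  shows that the mass matrix entry indexed by (j, r), (k, s) is the wave
  cos(j tau sqrt A) fhat^(1/2)(sqrt A) u_(k,s) evaluated at the sensor x_r. As the ROM point spread
  function U(x) R^-1 V_o(y)^T is a combination of snapshots, g(j tau, x_r; y) is therefore entry
  (j, r) of M R^-1 V_o(y)^T = R^T V_o(y)^T.\<close>

definition orthonormal_on :: "'a::euclidean_space set \<Rightarrow> (nat \<Rightarrow> 'a \<Rightarrow> real) \<Rightarrow> bool" where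
  "orthonormal_on \<Omega> ef \<longleftrightarrow> (\<forall>k l. integrable (lebesgue_on \<Omega>) (\<lambda>x. ef k x * ef l x) \<and>
     integral\<^sup>L (lebesgue_on \<Omega>) (\<lambda>x. ef k x * ef l x) = (if k = l then 1 else 0))"

lemma spectral_system_orthonormal_on: "spectral_system \<Omega> th ef \<Longrightarrow> orthonormal_on \<Omega> ef"
  unfolding spectral_system_def orthonormal_on_def by blast

definition eigen_sum :: "(nat \<Rightarrow> 'a \<Rightarrow> real) \<Rightarrow> nat \<Rightarrow> (nat \<Rightarrow> real) \<Rightarrow> 'a \<Rightarrow> real" where
  "eigen_sum ef N b x = (\<Sum>l<N. b l * ef l x)"

lemma sum_eigen_sum:
  "(\<Sum>i\<in>I. w i * eigen_sum ef N (b i) x) = eigen_sum ef N (\<lambda>l. \<Sum>i\<in>I. w i * b i l) x"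
  unfolding eigen_sum_def sum_distrib_left sum_distrib_right
  by (subst sum.swap) (simp add: mult.assoc)

lemma eigen_mult_eigen_sum_eq: "(\<lambda>x. ef k x * eigen_sum ef N b x) = (\<lambda>x. \<Sum>l<N. b l * (ef k x * ef l x))"
  by (simp add: eigen_sum_def sum_distrib_left mult_ac)

lemma spec_dirac_eq_eigen_sum:
  assumes "\<And>l. N \<le> l \<Longrightarrow> h (th l) = 0"
  shows "spec_dirac th ef h z = eigen_sum ef N (\<lambda>l. h (th l) * ef l z)"
proof
  fix x
  have "spec_dirac th ef h z x = (\<Sum>l<N. h (th l) * ef l x * ef l z)"
    unfolding spec_dirac_def using assms by (intro suminf_finite) auto
  then show "spec_dirac th ef h z x = eigen_sum ef N (\<lambda>l. h (th l) * ef l z) x"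
    by (simp add: eigen_sum_def mult_ac)
qed

context
  fixes \<Omega> :: "'a::euclidean_space set" and ef :: "nat \<Rightarrow> 'a \<Rightarrow> real"
  assumes orthonormal: "orthonormal_on \<Omega> ef"
begin

lemma integrable_eigen_mult_eigen_sum:
  "integrable (lebesgue_on \<Omega>) (\<lambda>x. ef k x * eigen_sum ef N b x)"
  using orthonormal unfolding eigen_mult_eigen_sum_eq orthonormal_on_def by auto

lemma integral_eigen_mult_eigen_sum:
  "integral\<^sup>L (lebesgue_on \<Omega>) (\<lambda>x. ef k x * eigen_sum ef N b x) = (if k < N then b k else 0)"
proof -
  have "integral\<^sup>L (lebesgue_on \<Omega>) (\<lambda>x. ef k x * eigen_sum ef N b x)
      = (\<Sum>l<N. b l * (if k = l then 1 else 0))"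
    using orthonormal unfolding eigen_mult_eigen_sum_eq orthonormal_on_def
    by (simp add: integral_sum)
  then show ?thesis
    by (simp add: if_distrib sum.delta' cong: if_cong)
qed

lemma spec_op_eigen_sum:
  "spec_op \<Omega> th ef h (eigen_sum ef N b) = eigen_sum ef N (\<lambda>l. h (th l) * b l)"
proof
  fix x
  have "spec_op \<Omega> th ef h (eigen_sum ef N b) x
      = (\<Sum>l. h (th l) * ef l x * (if l < N then b l else 0))"
    unfolding spec_op_def integral_eigen_mult_eigen_sum ..
  also have "\<dots> = (\<Sum>l<N. h (th l) * ef l x * b l)"
    by (subst suminf_finite[of "{..<N}"]) auto
  finally show "spec_op \<Omega> th ef h (eigen_sum ef N b) x = eigen_sum ef N (\<lambda>l. h (th l) * b l) x"
    by (simp add: eigen_sum_def mult_ac)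
qed

lemma integral_eigen_sum_mult_eigen_sum:
  "integral\<^sup>L (lebesgue_on \<Omega>) (\<lambda>x. eigen_sum ef N a x * eigen_sum ef N b x) = (\<Sum>l<N. a l * b l)"
proof -
  have "(\<lambda>x. eigen_sum ef N a x * eigen_sum ef N b x)
      = (\<lambda>x. \<Sum>l<N. a l * (ef l x * eigen_sum ef N b x))"
    by (simp add: eigen_sum_def sum_distrib_right mult.assoc)
  then show ?thesis
    by (simp add: integral_sum integrable_eigen_mult_eigen_sum integral_eigen_mult_eigen_sum)
qed

lemma spec_op_sum_eigen_sum:
  "spec_op \<Omega> th ef h (\<lambda>x. \<Sum>i\<in>I. w i * eigen_sum ef N (b i) x) x
     = (\<Sum>i\<in>I. w i * spec_op \<Omega> th ef h (eigen_sum ef N (b i)) x)"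
  by (simp add: sum_eigen_sum spec_op_eigen_sum mult.left_commute sum_distrib_left)

end

lemma band_limited_eventually_zero:
  assumes th: "filterlim th at_top sequentially"
    and band: "\<forall>w. B < \<bar>w\<bar> \<longrightarrow> fhat w = 0"
  obtains N where "\<And>l. N \<le> l \<Longrightarrow> fhat (sqrt (th l)) = 0"
proof -
  obtain N where N: "\<And>l. N \<le> l \<Longrightarrow> (\<bar>B\<bar> + 1)\<^sup>2 \<le> th l"
    using th unfolding filterlim_at_top eventually_sequentially by blast
  have "B < \<bar>sqrt (th l)\<bar>" if "N \<le> l" for l
    using real_sqrt_le_mono[OF N[OF that]] by simp
  with band that show ?thesis by blast
qed

lemma cos_sum_plus_cos_dist:
  "cos (real (p + q) * x) + cos (real (max p q - min p q) * x)
     = 2 * cos (real p * x) * cos (real q * x)"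
proof -
  have "cos (real (max p q - min p q) * x) = cos (real p * x - real q * x)"
  proof (cases "p \<le> q")
    case True
    then have "real (max p q - min p q) * x = - (real p * x - real q * x)"
      by (simp add: of_nat_diff algebra_simps)
    then show ?thesis by (simp only: cos_minus)
  next
    case False
    then show ?thesis by (simp add: of_nat_diff algebra_simps)
  qed
  then show ?thesis
    by (simp add: distrib_right cos_add cos_diff)
qed

lemma det_nonzero_if_gram_pos_def:
  assumes R: "R \<in> carrier_mat k k" and pd: "sym_pos_def (transpose_mat R * R)"
  shows "Determinant.det R \<noteq> 0"
proof
  assume "Determinant.det R = 0"
  then obtain v where v: "v \<in> carrier_vec k" "v \<noteq> 0\<^sub>v k" "R *\<^sub>v v = 0\<^sub>v k"
    using det_0_iff_vec_prod_zero[OF R] by auto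
  have "(transpose_mat R * R) *\<^sub>v v = transpose_mat R *\<^sub>v (R *\<^sub>v v)"
    using R v by (auto intro: assoc_mult_mat_vec)
  also have "\<dots> = 0\<^sub>v k"
    using R v by auto
  finally have "v \<bullet> ((transpose_mat R * R) *\<^sub>v v) = 0"
    using v by simp
  moreover have "v \<bullet> ((transpose_mat R * R) *\<^sub>v v) > 0"
    using pd v R unfolding sym_pos_def_def by auto
  ultimately show False by simp
qed

lemma mat_inv_inverts:
  assumes R: "R \<in> carrier_mat k k" and det: "Determinant.det R \<noteq> 0"
  shows "mat_inv R \<in> carrier_mat k k" and "R * mat_inv R = 1\<^sub>m k"
proof -
  obtain S where "S \<in> carrier_mat k k" "S * R = 1\<^sub>m k" "R * S = 1\<^sub>m k"
    using det_non_zero_imp_unit[OF R det, of "()"] by (auto simp: Units_def ring_mat_def)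
  with R have "\<exists>S. S \<in> carrier_mat (dim_row R) (dim_row R) \<and> inverts_mat R S \<and> inverts_mat S R"
    unfolding inverts_mat_def by auto
  then have "mat_inv R \<in> carrier_mat (dim_row R) (dim_row R) \<and> inverts_mat R (mat_inv R)"
    unfolding mat_inv_def by (rule someI2_ex) blast
  with R show "mat_inv R \<in> carrier_mat k k" and "R * mat_inv R = 1\<^sub>m k"
    unfolding inverts_mat_def by auto
qed

lemma gram_mult_mat_inv:
  assumes R: "R \<in> carrier_mat k k" and det: "Determinant.det R \<noteq> 0"
    and V: "V \<in> carrier_mat p k"
  shows "(transpose_mat R * R) * (mat_inv R * transpose_mat V) = transpose_mat (V * R)"
proof -
  note Ri = mat_inv_inverts[OF R det]
  have "(transpose_mat R * R) * (mat_inv R * transpose_mat V)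
      = transpose_mat R * (R * (mat_inv R * transpose_mat V))"
    using R Ri V by (subst assoc_mult_mat) auto
  also have "R * (mat_inv R * transpose_mat V) = (R * mat_inv R) * transpose_mat V"
    using R Ri V by (subst assoc_mult_mat) auto
  also have "\<dots> = transpose_mat V"
    using Ri V by simp
  finally show ?thesis
    using transpose_mult[OF V R] by simp
qed

lemma block_index_less: "j < n \<Longrightarrow> r < m \<Longrightarrow> j * m + r < n * (m::nat)"
  using mult_le_mono1[of "Suc j" n m] by simp

lemma mult_block_unit_index:
  assumes A: "A \<in> carrier_mat p (n * m)" and "i < p" "j < n" "r < m"
  shows "(A * block_unit m n j) $$ (i, r) = A $$ (i, j * m + r)"
proof -
  have "(A * block_unit m n j) $$ (i, r) = (\<Sum>b<n * m. A $$ (i, b) * (if b = j * m + r then 1 else 0))"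
    using assms unfolding block_unit_def by (simp add: scalar_prod_def atLeast0LessThan)
  then show ?thesis
    using block_index_less[OF assms(3,4)] by (simp add: if_distrib sum.delta' cong: if_cong)
qed

lemma orth_snap_carrier:
  "mat_inv R \<in> carrier_mat (n * m) (n * m) \<Longrightarrow> orth_snap \<Omega> th ef fhat \<tau> xs m n R x \<in> carrier_mat 1 (n * m)"
  unfolding orth_snap_def snap_row_def by auto

lemma mat_inv_mult_orth_snap_carrier:
  assumes "mat_inv R \<in> carrier_mat (n * m) (n * m)" and "mat_inv Ro \<in> carrier_mat (n * m) (n * m)"
  shows "mat_inv R * transpose_mat (orth_snap \<Omega> th ef fhat \<tau> xs m n Ro y) \<in> carrier_mat (n * m) 1"
proof -
  have "transpose_mat (orth_snap \<Omega> th ef fhat \<tau> xs m n Ro y) \<in> carrier_mat (n * m) 1"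
    using orth_snap_carrier[OF assms(2)] by auto
  with assms(1) show ?thesis by auto
qed

lemma rom_psf_eq_snapshot_sum:
  fixes \<Omega> :: "'a::euclidean_space set" and tho efo fhat \<tau> xs y
  assumes Ri: "mat_inv R \<in> carrier_mat (n * m) (n * m)" and Ro: "mat_inv Ro \<in> carrier_mat (n * m) (n * m)"
  defines "W \<equiv> mat_inv R * transpose_mat (orth_snap \<Omega> tho efo fhat \<tau> xs m n Ro y)"
  shows "rom_psf \<Omega> th ef tho efo fhat \<tau> xs m n R Ro y x
           = (\<Sum>b<n * m. W $$ (b, 0) * snapshot \<Omega> th ef fhat \<tau> xs (b div m) (b mod m) x)"
proof -
  define U where "U = snap_row \<Omega> th ef fhat \<tau> xs m n x"
  define Vo where "Vo = orth_snap \<Omega> tho efo fhat \<tau> xs m n Ro y"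
  have U: "U \<in> carrier_mat 1 (n * m)"
    unfolding U_def snap_row_def by simp
  have Vo: "transpose_mat Vo \<in> carrier_mat (n * m) 1"
    unfolding Vo_def using orth_snap_carrier[OF Ro] by auto
  have W: "W \<in> carrier_mat (n * m) 1"
    unfolding W_def by (rule mat_inv_mult_orth_snap_carrier[OF Ri Ro])
  have "rom_psf \<Omega> th ef tho efo fhat \<tau> xs m n R Ro y x = (U * mat_inv R * transpose_mat Vo) $$ (0, 0)"
    unfolding rom_psf_def U_def Vo_def by (simp only: orth_snap_def[of \<Omega> th ef])
  also have "\<dots> = (U * W) $$ (0, 0)"
    unfolding W_def Vo_def[symmetric] using U Ri Vo by (subst assoc_mult_mat) auto
  also have "\<dots> = (\<Sum>b<n * m. W $$ (b, 0) * snapshot \<Omega> th ef fhat \<tau> xs (b div m) (b mod m) x)"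
    using W unfolding U_def snap_row_def
    by (simp add: scalar_prod_def atLeast0LessThan mult.commute)
  finally show ?thesis .
qed

locale band_limited_spectrum =
  fixes \<Omega> :: "'a::euclidean_space set" and th :: "nat \<Rightarrow> real" and ef :: "nat \<Rightarrow> 'a \<Rightarrow> real"
    and fhat :: "real \<Rightarrow> real" and N :: nat
  assumes orthonormal: "orthonormal_on \<Omega> ef"
    and band_limit: "\<And>l. N \<le> l \<Longrightarrow> fhat (sqrt (th l)) = 0"
begin

definition amp :: "nat \<Rightarrow> real" where
  "amp l = sqrt (fhat (sqrt (th l)))"

lemma sensor_fun_eq_eigen_sum:
  "sensor_fun th ef fhat xs s = eigen_sum ef N (\<lambda>l. amp l * ef l (xs s))"
  unfolding sensor_fun_def amp_def by (rule spec_dirac_eq_eigen_sum) (simp add: band_limit)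

lemma snapshot_eq_eigen_sum:
  "snapshot \<Omega> th ef fhat \<tau> xs k s
     = eigen_sum ef N (\<lambda>l. cos (real k * \<tau> * sqrt (th l)) * (amp l * ef l (xs s)))"
  unfolding snapshot_def sensor_fun_eq_eigen_sum by (rule spec_op_eigen_sum[OF orthonormal])

lemma data_mat_entry:
  assumes "r < m" "s < m"
  shows "data_mat \<Omega> th ef fhat \<tau> xs m p $$ (r, s)
     = (\<Sum>l<N. amp l * ef l (xs r) * (cos (real p * \<tau> * sqrt (th l)) * (amp l * ef l (xs s))))"
  using assms unfolding data_mat_def snapshot_eq_eigen_sum sensor_fun_eq_eigen_sum
  by (simp add: integral_eigen_sum_mult_eigen_sum[OF orthonormal])

lemma mass_mat_entry:
  assumes a: "a < n * m" and b: "b < n * m"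
  shows "mass_mat \<Omega> th ef fhat \<tau> xs m n $$ (a, b)
     = spec_op \<Omega> th ef (\<lambda>w. cos (real (a div m) * \<tau> * sqrt w) * sqrt (fhat (sqrt w)))
         (snapshot \<Omega> th ef fhat \<tau> xs (b div m) (b mod m)) (xs (a mod m))"
proof -
  define p q where "p = a div m" and "q = b div m"
  define c where "c t l = cos (real t * \<tau> * sqrt (th l))" for t l
  have m_pos: "0 < m" using a by (cases m) auto
  have "mass_mat \<Omega> th ef fhat \<tau> xs m n $$ (a, b)
      = (\<Sum>l<N. amp l * ef l (xs (a mod m)) * (amp l * ef l (xs (b mod m)))
           * ((c (p + q) l + c (max p q - min p q) l) / 2))"
    using a b m_pos unfolding mass_mat_def p_def q_def c_def
    by (simp add: data_mat_entry sum.distrib[symmetric] sum_divide_distrib algebra_simps)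
  also have "\<dots> = (\<Sum>l<N. amp l * ef l (xs (a mod m)) * (amp l * ef l (xs (b mod m)))
           * (c p l * c q l))"
    unfolding c_def using cos_sum_plus_cos_dist[of p q "\<tau> * sqrt (th _)"]
    by (simp add: mult.assoc)
  also have "\<dots> = spec_op \<Omega> th ef (\<lambda>w. cos (real p * \<tau> * sqrt w) * sqrt (fhat (sqrt w)))
         (snapshot \<Omega> th ef fhat \<tau> xs q (b mod m)) (xs (a mod m))"
    unfolding snapshot_eq_eigen_sum spec_op_eigen_sum[OF orthonormal] eigen_sum_def c_def amp_def
    by (simp add: mult_ac)
  finally show ?thesis
    unfolding p_def q_def .
qed

lemma internal_wave_at_sensor_eq_mass_mult:
  fixes tho efo \<tau> xs y
  assumes "j < n" "r < m"
    and Ri: "mat_inv R \<in> carrier_mat (n * m) (n * m)" and Ro: "mat_inv Ro \<in> carrier_mat (n * m) (n * m)"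
  defines "W \<equiv> mat_inv R * transpose_mat (orth_snap \<Omega> tho efo fhat \<tau> xs m n Ro y)"
  shows "internal_wave \<Omega> th ef tho efo fhat \<tau> xs m n R Ro (real j * \<tau>) (xs r) y
     = (mass_mat \<Omega> th ef fhat \<tau> xs m n * W) $$ (j * m + r, 0)"
proof -
  let ?h = "\<lambda>w. cos (real j * \<tau> * sqrt w) * sqrt (fhat (sqrt w))"
  have a: "j * m + r < n * m" "(j * m + r) div m = j" "(j * m + r) mod m = r"
    using assms(1,2) block_index_less by auto
  have W: "W \<in> carrier_mat (n * m) 1"
    unfolding W_def by (rule mat_inv_mult_orth_snap_carrier[OF Ri Ro])
  have "internal_wave \<Omega> th ef tho efo fhat \<tau> xs m n R Ro (real j * \<tau>) (xs r) y
      = spec_op \<Omega> th ef ?h (\<lambda>x. \<Sum>b<n * m. W $$ (b, 0) * snapshot \<Omega> th ef fhat \<tau> xs (b div m) (b mod m) x) (xs r)"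
    unfolding internal_wave_def rom_psf_eq_snapshot_sum[OF Ri Ro] W_def ..
  also have "\<dots> = (\<Sum>b<n * m. W $$ (b, 0) * spec_op \<Omega> th ef ?h (snapshot \<Omega> th ef fhat \<tau> xs (b div m) (b mod m)) (xs r))"
    unfolding snapshot_eq_eigen_sum by (rule spec_op_sum_eigen_sum[OF orthonormal])
  also have "\<dots> = (\<Sum>b<n * m. mass_mat \<Omega> th ef fhat \<tau> xs m n $$ (j * m + r, b) * W $$ (b, 0))"
    using a by (intro sum.cong refl) (simp add: mass_mat_entry)
  also have "\<dots> = (mass_mat \<Omega> th ef fhat \<tau> xs m n * W) $$ (j * m + r, 0)"
    using a W unfolding mass_mat_def by (simp add: scalar_prod_def atLeast0LessThan)
  finally show ?thesis .
qed

lemma internal_wave_at_sensor: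
  assumes j: "j < n" and r: "r < m"
    and R: "R \<in> carrier_mat (n * m) (n * m)" and det_R: "Determinant.det R \<noteq> 0"
    and R_gram: "mass_mat \<Omega> th ef fhat \<tau> xs m n = transpose_mat R * R"
    and Ro: "mat_inv Ro \<in> carrier_mat (n * m) (n * m)"
  shows "internal_wave \<Omega> th ef tho efo fhat \<tau> xs m n R Ro (real j * \<tau>) (xs r) y
     = (orth_snap \<Omega> tho efo fhat \<tau> xs m n Ro y * R * block_unit m n j) $$ (0, r)"
proof -
  define Vo where "Vo = orth_snap \<Omega> tho efo fhat \<tau> xs m n Ro y"
  have Vo: "Vo \<in> carrier_mat 1 (n * m)"
    unfolding Vo_def using orth_snap_carrier[OF Ro] .
  have "internal_wave \<Omega> th ef tho efo fhat \<tau> xs m n R Ro (real j * \<tau>) (xs r) y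
      = ((transpose_mat R * R) * (mat_inv R * transpose_mat Vo)) $$ (j * m + r, 0)"
    using internal_wave_at_sensor_eq_mass_mult[OF j r mat_inv_inverts(1)[OF R det_R] Ro] R_gram
    unfolding Vo_def by simp
  also have "\<dots> = (Vo * R) $$ (0, j * m + r)"
    using gram_mult_mat_inv[OF R det_R Vo] block_index_less[OF j r] Vo R by simp
  also have "\<dots> = (Vo * R * block_unit m n j) $$ (0, r)"
    using mult_block_unit_index[of "Vo * R" 1 n m 0 j r] Vo R j r by simp
  finally show ?thesis
    unfolding Vo_def .
qed

end

theorem proposition1:
  fixes \<Omega> :: "'a::euclidean_space set"
    and th tho :: "nat \<Rightarrow> real" and ef efo :: "nat \<Rightarrow> 'a \<Rightarrow> real"
    and fhat :: "real \<Rightarrow> real" and \<tau> :: real and xs :: "nat \<Rightarrow> 'a"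
    and m n j :: nat and R Ro :: "real mat" and y :: 'a
  assumes dom: "open \<Omega>" "bounded \<Omega>" "connected \<Omega>" "\<Omega> \<noteq> {}"
    and sys: "spectral_system \<Omega> th ef"
    and sys_o: "spectral_system \<Omega> tho efo"
    and fhat_nonneg: "\<forall>w. 0 \<le> fhat w"
    and fhat_even: "\<forall>w. fhat (- w) = fhat w"
    and fhat_bl: "\<exists>B. \<forall>w. B < \<bar>w\<bar> \<longrightarrow> fhat w = 0"
    and sensors: "\<forall>s < m. xs s \<in> \<Omega>"
    and n_pos: "1 \<le> n" and tau_pos: "0 < \<tau>" and y_in: "y \<in> \<Omega>"
    and M_spd: "sym_pos_def (mass_mat \<Omega> th ef fhat \<tau> xs m n)"
    and R_dim: "R \<in> carrier_mat (n * m) (n * m)"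
    and R_chol: "mass_mat \<Omega> th ef fhat \<tau> xs m n = transpose_mat R * R"
    and R_upper: "block_upper_triangular m R"
    and Mo_spd: "sym_pos_def (mass_mat \<Omega> tho efo fhat \<tau> xs m n)"
    and Ro_dim: "Ro \<in> carrier_mat (n * m) (n * m)"
    and Ro_chol: "mass_mat \<Omega> tho efo fhat \<tau> xs m n = transpose_mat Ro * Ro"
    and Ro_upper: "block_upper_triangular m Ro"
    and j_lt: "j < n"
  shows "Matrix.mat 1 m (\<lambda>(_, r). internal_wave \<Omega> th ef tho efo fhat \<tau> xs m n R Ro
            (real j * \<tau>) (xs r) y)
         = orth_snap \<Omega> tho efo fhat \<tau> xs m n Ro y * R * block_unit m n j"
proof -
  obtain B where "\<forall>w. B < \<bar>w\<bar> \<longrightarrow> fhat w = 0"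
    using fhat_bl by blast
  then obtain N where "\<And>l. N \<le> l \<Longrightarrow> fhat (sqrt (th l)) = 0"
    using sys band_limited_eventually_zero unfolding spectral_system_def by metis
  then interpret band_limited_spectrum \<Omega> th ef fhat N
    using sys spectral_system_orthonormal_on by unfold_locales
  have det_R: "Determinant.det R \<noteq> 0"
    using det_nonzero_if_gram_pos_def[OF R_dim] M_spd R_chol by simp
  have Ro: "mat_inv Ro \<in> carrier_mat (n * m) (n * m)"
    using mat_inv_inverts(1)[OF Ro_dim] det_nonzero_if_gram_pos_def[OF Ro_dim] Mo_spd Ro_chol by simp
  have "orth_snap \<Omega> tho efo fhat \<tau> xs m n Ro y \<in> carrier_mat 1 (n * m)"
    by (rule orth_snap_carrier[OF Ro])
  then show ?thesis
    using internal_wave_at_sensor[OF j_lt _ R_dim det_R R_chol Ro]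
    by (intro eq_matI) (auto simp: block_unit_def)
qed

end
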